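(* Let $S$ be a specialisation independent scheduling rule, $G$ a p-goal and $\phi$ a substitution. If there is a p-SLD derivation $G\xrightarrow{S,X,\theta}\cdot$ via $S$ with template $X$ and composed mgu $\theta$ (the composition of the mgus of its steps), then there is a p-SLD derivation $G\theta\phi\xrightarrow{S,X}\cdot$ via $S$ with the same template $X$.
   Context: A p-atom is a pair $a[p]$ of an atom $a$ and a rational priority $p$. A p-goal is a finite set of p-atoms with pairwise distinct priorities, regarded as a list ordered by increasing priority. Substitutions act on atoms and leave priorities unchanged. A clause is $h\leftarrow B$ with $h$ an atom and $B$ a p-goal. For p-goals with no common priority, $F+G=F\cup G$; $F|G$ denotes $F+G$ when all priorities of $F$ are smaller than those of $G$. A shifting $\underline{\pi}$ is a strictly increasing bijection $\mathbb{Q}\to\mathbb{Q}$ acting on priorities. Priority derivation step: for a p-goal $a|F$ ($a$ of least priority), clause $c=(h\leftarrow B)$, renaming $\xi$ with $var(a|F)\cap var(c\xi)=\emptyset$, idempotent relevant mgu $\theta$ of $a$ and $h\xi$, shifting $\underline{\pi}$ with $F$, $B\xi\underline{\pi}$ sharing no priority: $a|F\xrightarrow{c\xi,\theta}(F+B\xi\underline{\pi})\theta$. A p-SLD derivation $G_0\xrightarrow{c_0\xi_0,\theta_0}G_1\cdots\xrightarrow{c_{k}\xi_{k},\theta_{k}}G_{k+1}$ is a sequence of such steps with each renamed clause variable-disjoint from $G_0$ and all earlier renamed clauses; its template is $c_0,\dots,c_k$ and it is written $G_0\xrightarrow{M,\theta}G_{k+1}$ with $\theta=\theta_0\cdots\theta_k$;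 it is via $S$ if all steps lie in $S$. Lowering: for $c=(h\leftarrow B)$, a step $a\lambda\underline{\sigma}|(K\lambda\underline{\sigma}+X)\xrightarrow{c}(X+K\lambda\underline{\sigma}+B\xi''\underline{\theta}'')\alpha''$ is a lowering by $X$ of $a|K\xrightarrow{c}(K+B\xi'\underline{\theta}')\alpha'$ ($\lambda$ a substitution, $\underline\sigma$ a shifting); a congruent lowering if some shifting $\underline{\rho}$ has $K\underline{\rho}=K\underline{\sigma}$ and $B\underline{\theta}'\underline{\rho}=B\underline{\theta}''$. Steps are congruent lowerings of each other if each is a congruent lowering of the other. A set $S$ of steps is complete if (i) whenever some step $G\xrightarrow{c}\cdot$ exists, some step $G\xrightarrow{c}\cdot$ lies in $S$, and (ii) $S$ contains every step that is a congruent lowering of each other with a step of $S$; it is specialisation independent if whenever $Ds_1,Ds_2\in S$ and $Ds_2$ is a lowering of $Ds_1$ by $X$, $Ds_2$ is a congruent lowering of $Ds_1$ by $X$. A specialisation independent scheduling rule is a complete specialisation independent set of steps. *)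

theory Defs
  imports Main "HOL.Rat"
begin

datatype ('f, 'v) fterm = Var 'v | Fun 'f "('f, 'v) fterm list"

datatype ('p, 'f, 'v) atom = Atom 'p "('f, 'v) fterm list"

type_synonym ('f, 'v) subst = "'v \<Rightarrow> ('f, 'v) fterm"

fun subst_term :: "('f, 'v) subst \<Rightarrow> ('f, 'v) fterm \<Rightarrow> ('f, 'v) fterm" where
  "subst_term \<sigma> (Var x) = \<sigma> x"
| "subst_term \<sigma> (Fun f ts) = Fun f (map (subst_term \<sigma>) ts)"

fun vars_term :: "('f, 'v) fterm \<Rightarrow> 'v set" where
  "vars_term (Var x) = {x}"
| "vars_term (Fun f ts) = \<Union> (set (map vars_term ts))"

fun subst_atom :: "('f, 'v) subst \<Rightarrow> ('p, 'f, 'v) atom \<Rightarrow> ('p, 'f, 'v) atom" where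
  "subst_atom \<sigma> (Atom P ts) = Atom P (map (subst_term \<sigma>) ts)"

fun vars_atom :: "('p, 'f, 'v) atom \<Rightarrow> 'v set" where
  "vars_atom (Atom P ts) = \<Union> (set (map vars_term ts))"

definition subst_comp :: "('f, 'v) subst \<Rightarrow> ('f, 'v) subst \<Rightarrow> ('f, 'v) subst" (infixl "\<circ>\<^sub>s" 75) where
  "\<sigma> \<circ>\<^sub>s \<tau> = (\<lambda>x. subst_term \<tau> (\<sigma> x))"

definition subst_domain :: "('f, 'v) subst \<Rightarrow> 'v set" where
  "subst_domain \<sigma> = {x. \<sigma> x \<noteq> Var x}"

definition subst_range_vars :: "('f, 'v) subst \<Rightarrow> 'v set" where
  "subst_range_vars \<sigma> = (\<Union>x \<in> subst_domain \<sigma>. vars_term (\<sigma> x))"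

definition subst_vars :: "('f, 'v) subst \<Rightarrow> 'v set" where
  "subst_vars \<sigma> = subst_domain \<sigma> \<union> subst_range_vars \<sigma>"

definition renaming :: "('f, 'v) subst \<Rightarrow> bool" where
  "renaming \<xi> \<longleftrightarrow> (\<exists>f. bij f \<and> \<xi> = (\<lambda>x. Var (f x)))"

definition unifier :: "('f, 'v) subst \<Rightarrow> ('p, 'f, 'v) atom \<Rightarrow> ('p, 'f, 'v) atom \<Rightarrow> bool" where
  "unifier \<sigma> a b \<longleftrightarrow> subst_atom \<sigma> a = subst_atom \<sigma> b"

definition mgu :: "('f, 'v) subst \<Rightarrow> ('p, 'f, 'v) atom \<Rightarrow> ('p, 'f, 'v) atom \<Rightarrow> bool" where
  "mgu \<theta> a b \<longleftrightarrow> unifier \<theta> a b \<and> (\<forall>\<sigma>. unifier \<sigma> a b \<longrightarrow> (\<exists>\<delta>. \<sigma> = \<theta> \<circ>\<^sub>s \<delta>))"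

definition idem_rel_mgu :: "('f, 'v) subst \<Rightarrow> ('p, 'f, 'v) atom \<Rightarrow> ('p, 'f, 'v) atom \<Rightarrow> bool" where
  "idem_rel_mgu \<theta> a b \<longleftrightarrow> mgu \<theta> a b \<and> \<theta> \<circ>\<^sub>s \<theta> = \<theta>
     \<and> subst_vars \<theta> \<subseteq> vars_atom a \<union> vars_atom b"

type_synonym ('p, 'f, 'v) patom = "('p, 'f, 'v) atom \<times> rat"
type_synonym ('p, 'f, 'v) pgoal = "('p, 'f, 'v) patom set"
type_synonym ('p, 'f, 'v) clause = "('p, 'f, 'v) atom \<times> ('p, 'f, 'v) pgoal"

definition prios :: "('p, 'f, 'v) pgoal \<Rightarrow> rat set" where
  "prios G = snd ` G"

definition is_pgoal :: "('p, 'f, 'v) pgoal \<Rightarrow> bool" where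
  "is_pgoal G \<longleftrightarrow> finite G \<and> (\<forall>x\<in>G. \<forall>y\<in>G. snd x = snd y \<longrightarrow> x = y)"

definition subst_pgoal :: "('f, 'v) subst \<Rightarrow> ('p, 'f, 'v) pgoal \<Rightarrow> ('p, 'f, 'v) pgoal" where
  "subst_pgoal \<sigma> G = (\<lambda>(a, p). (subst_atom \<sigma> a, p)) ` G"

definition vars_pgoal :: "('p, 'f, 'v) pgoal \<Rightarrow> 'v set" where
  "vars_pgoal G = (\<Union>x\<in>G. vars_atom (fst x))"

definition shifting :: "(rat \<Rightarrow> rat) \<Rightarrow> bool" where
  "shifting \<pi> \<longleftrightarrow> strict_mono \<pi> \<and> bij \<pi>"

definition shift_pgoal :: "(rat \<Rightarrow> rat) \<Rightarrow> ('p, 'f, 'v) pgoal \<Rightarrow> ('p, 'f, 'v) pgoal" where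
  "shift_pgoal \<pi> G = (\<lambda>(a, p). (a, \<pi> p)) ` G"

definition subst_patom :: "('f, 'v) subst \<Rightarrow> ('p, 'f, 'v) patom \<Rightarrow> ('p, 'f, 'v) patom" where
  "subst_patom \<sigma> x = (subst_atom \<sigma> (fst x), snd x)"

definition shift_patom :: "(rat \<Rightarrow> rat) \<Rightarrow> ('p, 'f, 'v) patom \<Rightarrow> ('p, 'f, 'v) patom" where
  "shift_patom \<pi> x = (fst x, \<pi> (snd x))"

definition is_clause :: "('p, 'f, 'v) clause \<Rightarrow> bool" where
  "is_clause c \<longleftrightarrow> is_pgoal (snd c)"

definition subst_clause :: "('f, 'v) subst \<Rightarrow> ('p, 'f, 'v) clause \<Rightarrow> ('p, 'f, 'v) clause" where
  "subst_clause \<sigma> c = (subst_atom \<sigma> (fst c), subst_pgoal \<sigma> (snd c))"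

definition vars_clause :: "('p, 'f, 'v) clause \<Rightarrow> 'v set" where
  "vars_clause c = vars_atom (fst c) \<union> vars_pgoal (snd c)"

text \<open>A step  a|F --c xi, theta-->  (F + B xi pi) theta  is recorded by its data:
  the selected p-atom a (of least priority), the rest F of the goal, the clause c,
  the renaming xi, the mgu theta and the shifting pi.\<close>
record ('p, 'f, 'v) pstep =
  st_sel    :: "('p, 'f, 'v) patom"
  st_rest   :: "('p, 'f, 'v) pgoal"
  st_clause :: "('p, 'f, 'v) clause"
  st_ren    :: "('f, 'v) subst"
  st_mgu    :: "('f, 'v) subst"
  st_shift  :: "rat \<Rightarrow> rat"

definition st_source :: "('p, 'f, 'v) pstep \<Rightarrow> ('p, 'f, 'v) pgoal" where
  "st_source s = insert (st_sel s) (st_rest s)"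

definition st_target :: "('p, 'f, 'v) pstep \<Rightarrow> ('p, 'f, 'v) pgoal" where
  "st_target s = subst_pgoal (st_mgu s)
      (st_rest s \<union> shift_pgoal (st_shift s) (subst_pgoal (st_ren s) (snd (st_clause s))))"

definition valid_step :: "('p, 'f, 'v) pstep \<Rightarrow> bool" where
  "valid_step s \<longleftrightarrow>
     is_pgoal (st_source s) \<and> (\<forall>y\<in>st_rest s. snd (st_sel s) < snd y)
     \<and> is_clause (st_clause s)
     \<and> renaming (st_ren s)
     \<and> vars_pgoal (st_source s) \<inter> vars_clause (subst_clause (st_ren s) (st_clause s)) = {}
     \<and> idem_rel_mgu (st_mgu s) (fst (st_sel s)) (subst_atom (st_ren s) (fst (st_clause s)))
     \<and> shifting (st_shift s)
     \<and> prios (st_rest s) \<inter> prios (shift_pgoal (st_shift s) (subst_pgoal (st_ren s) (snd (st_clause s)))) = {}"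

definition pderivation :: "('p, 'f, 'v) pgoal \<Rightarrow> ('p, 'f, 'v) pstep list \<Rightarrow> bool" where
  "pderivation G0 ds \<longleftrightarrow>
     (\<forall>i<length ds. valid_step (ds ! i))
     \<and> (ds \<noteq> [] \<longrightarrow> st_source (ds ! 0) = G0)
     \<and> (\<forall>i. Suc i < length ds \<longrightarrow> st_source (ds ! Suc i) = st_target (ds ! i))
     \<and> (\<forall>i<length ds. vars_clause (subst_clause (st_ren (ds ! i)) (st_clause (ds ! i)))
                        \<inter> vars_pgoal G0 = {})
     \<and> (\<forall>i<length ds. \<forall>j<i. vars_clause (subst_clause (st_ren (ds ! i)) (st_clause (ds ! i)))
                        \<inter> vars_clause (subst_clause (st_ren (ds ! j)) (st_clause (ds ! j))) = {})"

definition template :: "('p, 'f, 'v) pstep list \<Rightarrow> ('p, 'f, 'v) clause list" where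
  "template ds = map st_clause ds"

text \<open>Composed mgu theta_0 theta_1 ... theta_k (theta_0 applied first).\<close>
definition composed_mgu :: "('p, 'f, 'v) pstep list \<Rightarrow> ('f, 'v) subst" where
  "composed_mgu ds = foldr (\<lambda>s acc. st_mgu s \<circ>\<^sub>s acc) ds Var"

definition via :: "('p, 'f, 'v) pstep set \<Rightarrow> ('p, 'f, 'v) pstep list \<Rightarrow> bool" where
  "via S ds \<longleftrightarrow> set ds \<subseteq> S"

text \<open>ds2 is a lowering by X of ds1, witnessed by substitution lam and shifting sig:
  ds1 = a|K --c--> ..., ds2 = a lam sig | (K lam sig + X) --c--> ...\<close>
definition lowering_with ::
  "('f, 'v) subst \<Rightarrow> (rat \<Rightarrow> rat) \<Rightarrow> ('p, 'f, 'v) pgoal \<Rightarrow> ('p, 'f, 'v) pstep \<Rightarrow> ('p, 'f, 'v) pstep \<Rightarrow> bool" where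
  "lowering_with lam sig X ds2 ds1 \<longleftrightarrow>
     valid_step ds1 \<and> valid_step ds2 \<and> shifting sig \<and> is_pgoal X
     \<and> st_clause ds2 = st_clause ds1
     \<and> st_sel ds2 = shift_patom sig (subst_patom lam (st_sel ds1))
     \<and> prios (shift_pgoal sig (subst_pgoal lam (st_rest ds1))) \<inter> prios X = {}
     \<and> st_rest ds2 = shift_pgoal sig (subst_pgoal lam (st_rest ds1)) \<union> X"

definition lowering :: "('p, 'f, 'v) pgoal \<Rightarrow> ('p, 'f, 'v) pstep \<Rightarrow> ('p, 'f, 'v) pstep \<Rightarrow> bool" where
  "lowering X ds2 ds1 \<longleftrightarrow> (\<exists>lam sig. lowering_with lam sig X ds2 ds1)"

definition congruent_lowering :: "('p, 'f, 'v) pgoal \<Rightarrow> ('p, 'f, 'v) pstep \<Rightarrow> ('p, 'f, 'v) pstep \<Rightarrow> bool" where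
  "congruent_lowering X ds2 ds1 \<longleftrightarrow>
     (\<exists>lam sig. lowering_with lam sig X ds2 ds1
        \<and> (\<exists>\<rho>. shifting \<rho>
              \<and> shift_pgoal \<rho> (st_rest ds1) = shift_pgoal sig (st_rest ds1)
              \<and> shift_pgoal \<rho> (shift_pgoal (st_shift ds1) (snd (st_clause ds1)))
                  = shift_pgoal (st_shift ds2) (snd (st_clause ds1))))"

definition mutual_congruent_lowerings :: "('p, 'f, 'v) pstep \<Rightarrow> ('p, 'f, 'v) pstep \<Rightarrow> bool" where
  "mutual_congruent_lowerings ds1 ds2 \<longleftrightarrow>
     (\<exists>X. congruent_lowering X ds1 ds2) \<and> (\<exists>X. congruent_lowering X ds2 ds1)"

definition complete_steps :: "('p, 'f, 'v) pstep set \<Rightarrow> bool" where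
  "complete_steps S \<longleftrightarrow>
     S \<subseteq> {s. valid_step s}
     \<and> (\<forall>s. valid_step s \<longrightarrow>
          (\<exists>s'\<in>S. st_source s' = st_source s \<and> st_clause s' = st_clause s))
     \<and> (\<forall>s\<in>S. \<forall>s'. mutual_congruent_lowerings s' s \<longrightarrow> s' \<in> S)"

definition spec_independent :: "('p, 'f, 'v) pstep set \<Rightarrow> bool" where
  "spec_independent S \<longleftrightarrow>
     (\<forall>ds1\<in>S. \<forall>ds2\<in>S. \<forall>X. lowering X ds2 ds1 \<longrightarrow> congruent_lowering X ds2 ds1)"

definition spec_indep_scheduling_rule :: "('p, 'f, 'v) pstep set \<Rightarrow> bool" where
  "spec_indep_scheduling_rule S \<longleftrightarrow> complete_steps S \<and> spec_independent S"

end

theory Submission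
  imports Defs
begin

text \<open>The derivation is lifted step by step. Let its first step \<open>a|F \<rightarrow> (F + B\<xi>\<pi>)\<theta>\<close> with
  clause \<open>h \<leftarrow> B\<close> start from \<open>G\<close>, and let the lifted goal be \<open>G\<eta>\<close> shifted by \<open>\<sigma>\<close>, where
  \<open>\<eta>\<tau>\<close> agrees on \<open>G\<close> with \<open>\<theta>\<gamma>\<close> and \<open>\<gamma>\<close> is the instance computed by the rest of the derivation.
  Rename the clause apart with a fresh \<open>\<xi>'\<close>. The substitution \<open>\<mu>\<close> that is \<open>\<eta>\<close> on \<open>G\<close> and
  turns \<open>\<xi>\<close> into \<open>\<xi>'\<close>, followed by an extension \<open>\<tau>'\<close> of \<open>\<tau>\<close>, equals \<open>\<theta>\<gamma>\<close> on the step;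
  so \<open>a\<eta>\<close> and \<open>h\<xi>'\<close> have an idempotent relevant mgu \<open>\<theta>'\<close>, with \<open>\<tau>' = \<theta>'\<epsilon>\<close> and, since
  \<open>\<mu>\<theta>'\<close> unifies \<open>a\<close> and \<open>h\<xi>\<close>, \<open>\<mu>\<theta>' = \<theta>\<delta>\<close>. Completeness gives a step of \<open>S\<close> from the
  lifted goal with the same clause; the step with \<open>\<xi>'\<close>, \<open>\<theta>'\<close> and its shifting is a mutual
  congruent lowering of it, hence in \<open>S\<close>. It is a lowering of the original step by the empty
  goal, so specialisation independence supplies a shifting \<open>\<rho>\<close> that acts like \<open>\<sigma>\<close> on \<open>F\<close>
  and maps the old shifted body onto the new one. Then the new target is the old one
  instantiated by \<open>\<delta>\<close> and shifted by \<open>\<rho>\<close>, and \<open>\<delta>\<epsilon>\<close> agrees with \<open>\<gamma>\<close> on it, which is the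
  invariant for the rest of the derivation. Starting with \<open>\<eta>\<close> the composed mgu followed by \<open>\<phi>\<close>,
  and the identity shifting, gives the theorem.\<close>

section \<open>Substitutions\<close>

lemma subst_term_comp: "subst_term (\<sigma> \<circ>\<^sub>s \<tau>) t = subst_term \<tau> (subst_term \<sigma> t)"
  by (induction t) (auto simp: subst_comp_def)

lemma subst_atom_comp: "subst_atom (\<sigma> \<circ>\<^sub>s \<tau>) a = subst_atom \<tau> (subst_atom \<sigma> a)"
  by (cases a) (simp add: subst_term_comp)

lemma subst_comp_assoc: "(\<sigma> \<circ>\<^sub>s \<tau>) \<circ>\<^sub>s \<upsilon> = \<sigma> \<circ>\<^sub>s (\<tau> \<circ>\<^sub>s \<upsilon>)"
  by (rule ext) (metis subst_comp_def subst_term_comp)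

lemma subst_term_Var [simp]: "subst_term Var t = t"
  by (induction t) (auto simp: map_idI)

lemma subst_atom_Var [simp]: "subst_atom Var a = a"
  by (cases a) (simp add: map_idI)

lemma subst_comp_Var_left [simp]: "Var \<circ>\<^sub>s \<sigma> = \<sigma>"
  by (rule ext) (simp add: subst_comp_def)

lemma subst_comp_Var_right [simp]: "\<sigma> \<circ>\<^sub>s Var = \<sigma>"
  by (rule ext) (simp add: subst_comp_def)

lemma subst_term_cong:
  "(\<And>x. x \<in> vars_term t \<Longrightarrow> \<sigma> x = \<tau> x) \<Longrightarrow> subst_term \<sigma> t = subst_term \<tau> t"
  by (induction t) auto

lemma subst_atom_cong:
  "(\<And>x. x \<in> vars_atom a \<Longrightarrow> \<sigma> x = \<tau> x) \<Longrightarrow> subst_atom \<sigma> a = subst_atom \<tau> a"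
  by (cases a) (auto intro: subst_term_cong)

lemma subst_term_eq_imp_eq_on_vars:
  "subst_term \<sigma> t = subst_term \<tau> t \<Longrightarrow> x \<in> vars_term t \<Longrightarrow> \<sigma> x = \<tau> x"
  by (induction t) (auto simp: map_eq_conv)

lemma vars_term_subst: "vars_term (subst_term \<sigma> t) = (\<Union>x\<in>vars_term t. vars_term (\<sigma> x))"
  by (induction t) auto

lemma vars_atom_subst: "vars_atom (subst_atom \<sigma> a) = (\<Union>x\<in>vars_atom a. vars_term (\<sigma> x))"
  by (cases a) (auto simp: vars_term_subst)

lemma vars_term_rename: "vars_term (subst_term (\<lambda>x. Var (f x)) t) = f ` vars_term t"
  by (induction t) auto

lemma vars_atom_rename: "vars_atom (subst_atom (\<lambda>x. Var (f x)) a) = f ` vars_atom a"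
  by (cases a) (auto simp: vars_term_rename)

lemma finite_vars_term [simp]: "finite (vars_term t)"
  by (induction t) auto

lemma finite_vars_atom [simp]: "finite (vars_atom a)"
  by (cases a) auto

lemma subst_vars_subsetI:
  "(\<And>y. \<sigma> y \<noteq> Var y \<Longrightarrow> y \<in> V \<and> vars_term (\<sigma> y) \<subseteq> V) \<Longrightarrow> subst_vars \<sigma> \<subseteq> V"
  by (auto simp: subst_vars_def subst_domain_def subst_range_vars_def)

lemma subst_vars_subsetD:
  "subst_vars \<sigma> \<subseteq> V \<Longrightarrow> \<sigma> y \<noteq> Var y \<Longrightarrow> y \<in> V \<and> vars_term (\<sigma> y) \<subseteq> V"
  by (auto simp: subst_vars_def subst_domain_def subst_range_vars_def)

lemma fresh_bij:
  fixes A W :: "'v set"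
  assumes "infinite (UNIV :: 'v set)" "finite A" "finite W"
  obtains f where "bij f" "f ` A \<inter> W = {}"
proof -
  have "infinite (UNIV - (A \<union> W))" using assms by simp
  then obtain B where B: "B \<subseteq> UNIV - (A \<union> W)" "finite B" "card B = card A"
    using infinite_arbitrarily_large by metis
  obtain g where g: "bij_betw g A B" using finite_same_card_bij[OF assms(2) B(2)] B(3) by auto
  have AB: "A \<inter> B = {}" and gA: "g ` A = B" using B g by (auto simp: bij_betw_def)
  define f where "f x = (if x \<in> A then g x else if x \<in> B then inv_into A g x else x)" for x
  have "f (f x) = x" for x
  proof -
    consider "x \<in> A" | "x \<in> B" | "x \<notin> A" "x \<notin> B" by blast
    then show ?thesis
    proof cases
      case 1
      then have "g x \<in> B" "g x \<notin> A" using gA AB by auto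
      then show ?thesis using 1 g by (simp add: f_def bij_betw_def)
    next
      case 2
      then have "inv_into A g x \<in> A" using gA by (auto intro: inv_into_into)
      then show ?thesis using 2 AB gA by (auto simp: f_def f_inv_into_f)
    qed (simp add: f_def)
  qed
  then have "bij f" by (rule involuntory_imp_bij)
  moreover have "f ` A = B" using gA by (auto simp: f_def)
  ultimately show ?thesis using that B(1) by auto
qed

lemma subst_merge_renaming:
  assumes "bij f" "A \<inter> f ` C = {}"
  obtains \<mu> where "\<And>x. x \<in> A \<Longrightarrow> \<mu> x = \<sigma> x" "\<And>y. y \<in> C \<Longrightarrow> \<mu> (f y) = \<tau> y"
proof
  let ?\<mu> = "\<lambda>v. if v \<in> f ` C then \<tau> (inv f v) else \<sigma> v"
  show "?\<mu> x = \<sigma> x" if "x \<in> A" for x using assms(2) that by auto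
  show "?\<mu> (f y) = \<tau> y" if "y \<in> C" for y using assms(1) that by (simp add: bij_is_inj)
qed

section \<open>Most general unifiers\<close>

type_synonym ('f, 'v) equations = "(('f, 'v) fterm \<times> ('f, 'v) fterm) list"

definition unifies_eqs :: "('f, 'v) subst \<Rightarrow> ('f, 'v) equations \<Rightarrow> bool" where
  "unifies_eqs \<sigma> E \<longleftrightarrow> (\<forall>(s, t)\<in>set E. subst_term \<sigma> s = subst_term \<sigma> t)"

definition vars_eqs :: "('f, 'v) equations \<Rightarrow> 'v set" where
  "vars_eqs E = (\<Union>(s, t)\<in>set E. vars_term s \<union> vars_term t)"

fun term_size :: "('f, 'v) fterm \<Rightarrow> nat" where
  "term_size (Var x) = 1"
| "term_size (Fun f ts) = Suc (sum_list (map term_size ts))"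

definition size_eqs :: "('f, 'v) equations \<Rightarrow> nat" where
  "size_eqs E = sum_list (map (\<lambda>(s, t). term_size s + term_size t) E)"

text \<open>The condition \<open>\<sigma> = \<theta> \<circ>\<^sub>s \<sigma>\<close> for every unifier \<open>\<sigma>\<close> makes \<open>\<theta>\<close> both most general
  and idempotent (take \<open>\<sigma> = \<theta>\<close>).\<close>
definition mgu_eqs :: "('f, 'v) subst \<Rightarrow> ('f, 'v) equations \<Rightarrow> bool" where
  "mgu_eqs \<theta> E \<longleftrightarrow> unifies_eqs \<theta> E \<and> (\<forall>\<sigma>. unifies_eqs \<sigma> E \<longrightarrow> \<sigma> = \<theta> \<circ>\<^sub>s \<sigma>)
     \<and> subst_vars \<theta> \<subseteq> vars_eqs E"

lemma finite_vars_eqs [simp]: "finite (vars_eqs E)"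
  by (auto simp: vars_eqs_def)

lemma term_size_subst_var_le: "x \<in> vars_term t \<Longrightarrow> term_size (\<sigma> x) \<le> term_size (subst_term \<sigma> t)"
proof (induction t)
  case (Fun f ts)
  then obtain ti where ti: "ti \<in> set ts" "x \<in> vars_term ti" by auto
  then have "term_size (\<sigma> x) \<le> term_size (subst_term \<sigma> ti)" using Fun by auto
  also have "\<dots> \<le> sum_list (map term_size (map (subst_term \<sigma>) ts))"
    using ti by (intro member_le_sum_list) auto
  finally show ?case by simp
qed simp

lemma term_size_subst_var_less:
  assumes "x \<in> vars_term t" "t \<noteq> Var x"
  shows "term_size (\<sigma> x) < term_size (subst_term \<sigma> t)"
proof (cases t)
  case (Fun f ts)
  then obtain ti where ti: "ti \<in> set ts" "x \<in> vars_term ti" using assms by auto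
  have "term_size (\<sigma> x) \<le> term_size (subst_term \<sigma> ti)" by (rule term_size_subst_var_le[OF ti(2)])
  also have "\<dots> \<le> sum_list (map term_size (map (subst_term \<sigma>) ts))"
    using ti by (intro member_le_sum_list) auto
  finally show ?thesis using Fun by simp
qed (use assms in auto)

lemma map_eq_iff_zip: "map h ss = map h ts \<longleftrightarrow> length ss = length ts \<and> (\<forall>(a, b)\<in>set (zip ss ts). h a = h b)"
  by (induction ss ts rule: list_induct2') auto

lemma vars_eqs_zip: "length ss = length ts \<Longrightarrow>
  vars_eqs (zip ss ts) = (\<Union>s\<in>set ss. vars_term s) \<union> (\<Union>t\<in>set ts. vars_term t)"
  by (induction ss ts rule: list_induct2') (auto simp: vars_eqs_def)

lemma size_eqs_zip: "length ss = length ts \<Longrightarrow>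
  size_eqs (zip ss ts) = sum_list (map term_size ss) + sum_list (map term_size ts)"
  by (induction ss ts rule: list_induct2') (auto simp: size_eqs_def)

lemma mgu_eqs_Nil: "mgu_eqs Var []"
  by (auto simp: mgu_eqs_def unifies_eqs_def subst_vars_def subst_domain_def subst_range_vars_def)

lemma mgu_eqs_equivalent:
  assumes "\<And>\<sigma>. unifies_eqs \<sigma> E \<longleftrightarrow> unifies_eqs \<sigma> E'" "vars_eqs E \<subseteq> vars_eqs E'" "mgu_eqs \<theta> E"
  shows "mgu_eqs \<theta> E'"
  using assms unfolding mgu_eqs_def by blast

lemma mgu_eqs_trivial: "mgu_eqs \<theta> E \<Longrightarrow> mgu_eqs \<theta> ((t, t) # E)"
  by (rule mgu_eqs_equivalent) (auto simp: unifies_eqs_def vars_eqs_def)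

lemma mgu_eqs_swap: "mgu_eqs \<theta> ((s, t) # E) \<Longrightarrow> mgu_eqs \<theta> ((t, s) # E)"
  by (rule mgu_eqs_equivalent) (auto simp: unifies_eqs_def vars_eqs_def)

lemma mgu_eqs_decompose:
  assumes "length ss = length ts" "mgu_eqs \<theta> (zip ss ts @ E)"
  shows "mgu_eqs \<theta> ((Fun f ss, Fun f ts) # E)"
  by (rule mgu_eqs_equivalent[OF _ _ assms(2)])
    (use assms(1) in \<open>simp_all add: unifies_eqs_def map_eq_iff_zip, auto simp: vars_eqs_def vars_eqs_zip[OF assms(1), unfolded vars_eqs_def]\<close>)

definition eliminate_var :: "'v \<Rightarrow> ('f, 'v) fterm \<Rightarrow> ('f, 'v) equations \<Rightarrow> ('f, 'v) equations" where
  "eliminate_var x t E = map (\<lambda>(a, b). (subst_term (Var(x := t)) a, subst_term (Var(x := t)) b)) E"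

lemma unifies_eqs_eliminate_var:
  "unifies_eqs v (eliminate_var x t E) \<longleftrightarrow> unifies_eqs (Var(x := t) \<circ>\<^sub>s v) E"
  by (simp add: unifies_eqs_def eliminate_var_def subst_term_comp case_prod_beta)

lemma subst_comp_upd_eq_iff: "Var(x := t) \<circ>\<^sub>s v = v \<longleftrightarrow> v x = subst_term v t"
  by (auto simp: subst_comp_def fun_eq_iff)

lemma unifies_eqs_Cons_Var:
  "unifies_eqs v ((Var x, t) # E) \<longleftrightarrow> Var(x := t) \<circ>\<^sub>s v = v \<and> unifies_eqs v (eliminate_var x t E)"
proof -
  have "unifies_eqs v ((Var x, t) # E) \<longleftrightarrow> Var(x := t) \<circ>\<^sub>s v = v \<and> unifies_eqs v E"
    by (auto simp: unifies_eqs_def subst_comp_upd_eq_iff)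
  then show ?thesis by (auto simp: unifies_eqs_eliminate_var)
qed

lemma mgu_eqs_eliminate_var:
  assumes x: "x \<notin> vars_term t" and \<theta>: "mgu_eqs \<theta> (eliminate_var x t E)"
  shows "mgu_eqs (Var(x := t) \<circ>\<^sub>s \<theta>) ((Var x, t) # E)"
proof -
  define \<sigma> where "\<sigma> = Var(x := t)"
  define V where "V = vars_eqs ((Var x, t) # E)"
  have "unifies_eqs (\<sigma> \<circ>\<^sub>s \<theta>) ((Var x, t) # E)"
  proof -
    have "subst_term \<sigma> t = t"
      using x by (subst subst_term_cong[of t \<sigma> Var]) (auto simp: \<sigma>_def)
    then have "(\<sigma> \<circ>\<^sub>s \<theta>) x = subst_term (\<sigma> \<circ>\<^sub>s \<theta>) t"
      by (simp add: subst_term_comp) (simp add: subst_comp_def \<sigma>_def)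
    moreover have "unifies_eqs (\<sigma> \<circ>\<^sub>s \<theta>) E"
      using \<theta> unifies_eqs_eliminate_var[of \<theta> x t E] by (simp add: mgu_eqs_def \<sigma>_def)
    ultimately show ?thesis by (auto simp: unifies_eqs_def)
  qed
  moreover have "v = (\<sigma> \<circ>\<^sub>s \<theta>) \<circ>\<^sub>s v" if "unifies_eqs v ((Var x, t) # E)" for v
    using \<theta> that unfolding unifies_eqs_Cons_Var mgu_eqs_def \<sigma>_def by (metis subst_comp_assoc)
  moreover have "subst_vars (\<sigma> \<circ>\<^sub>s \<theta>) \<subseteq> V"
  proof (rule subst_vars_subsetI)
    have "vars_eqs (eliminate_var x t E) \<subseteq> V"
      by (auto simp: V_def vars_eqs_def eliminate_var_def vars_term_subst split: if_splits)
    then have \<theta>_vars: "subst_vars \<theta> \<subseteq> V"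
      using \<theta> by (auto simp: mgu_eqs_def)
    have vars_\<theta>: "vars_term (subst_term \<theta> u) \<subseteq> V" if "vars_term u \<subseteq> V" for u
    proof
      fix z assume "z \<in> vars_term (subst_term \<theta> u)"
      then obtain w where "w \<in> vars_term u" "z \<in> vars_term (\<theta> w)" by (auto simp: vars_term_subst)
      then show "z \<in> V"
        using that subst_vars_subsetD[OF \<theta>_vars, of w] by (cases "\<theta> w = Var w") auto
    qed
    fix y assume "(\<sigma> \<circ>\<^sub>s \<theta>) y \<noteq> Var y"
    then show "y \<in> V \<and> vars_term ((\<sigma> \<circ>\<^sub>s \<theta>) y) \<subseteq> V"
      using vars_\<theta>[of t] subst_vars_subsetD[OF \<theta>_vars, of y]
      by (cases "y = x") (auto simp: subst_comp_def \<sigma>_def V_def vars_eqs_def)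
  qed
  ultimately show ?thesis by (simp add: mgu_eqs_def \<sigma>_def V_def)
qed

lemma card_vars_eqs_eliminate_var:
  assumes "x \<notin> vars_term t"
  shows "card (vars_eqs (eliminate_var x t E)) < card (vars_eqs ((Var x, t) # E))"
proof (rule psubset_card_mono)
  have "vars_term (subst_term (Var(x := t)) a) \<subseteq> (vars_term a - {x}) \<union> vars_term t" for a
    by (auto simp: vars_term_subst split: if_splits)
  then show "vars_eqs (eliminate_var x t E) \<subset> vars_eqs ((Var x, t) # E)"
    using assms by (fastforce simp: vars_eqs_def eliminate_var_def)
qed simp

abbreviation unification_order :: "(('f, 'v) equations \<times> ('f, 'v) equations) set" where
  "unification_order \<equiv> measures [\<lambda>E. card (vars_eqs E), size_eqs]"

lemma unifies_eqs_Cons_Var_reduce: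
  assumes "subst_term u (Var x) = subst_term u t" "t \<noteq> Var x" "unifies_eqs u E"
  obtains E' where "(E', (Var x, t) # E) \<in> unification_order" "unifies_eqs u E'"
    "\<And>\<theta>. mgu_eqs \<theta> E' \<Longrightarrow> \<exists>\<theta>'. mgu_eqs \<theta>' ((Var x, t) # E)"
proof
  have x: "x \<notin> vars_term t"
    using term_size_subst_var_less[OF _ assms(2), of u] assms(1) by auto
  then show "(eliminate_var x t E, (Var x, t) # E) \<in> unification_order"
    using card_vars_eqs_eliminate_var[OF x] by simp
  show "unifies_eqs u (eliminate_var x t E)"
    using assms(1,3) unifies_eqs_Cons_Var[of u x t E] by (auto simp: unifies_eqs_def)
  show "\<exists>\<theta>'. mgu_eqs \<theta>' ((Var x, t) # E)" if "mgu_eqs \<theta> (eliminate_var x t E)" for \<theta>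
    using mgu_eqs_eliminate_var[OF x that] by blast
qed

text \<open>One step of unification: deletion, orientation, variable elimination and decomposition.
  Variable elimination lowers the number of variables, the other rules keep it and lower the size.\<close>
lemma unifies_eqs_Cons_reduce:
  assumes u: "unifies_eqs u ((s, t) # E)"
  obtains E' where "(E', (s, t) # E) \<in> unification_order" "unifies_eqs u E'"
    "\<And>\<theta>. mgu_eqs \<theta> E' \<Longrightarrow> \<exists>\<theta>'. mgu_eqs \<theta>' ((s, t) # E)"
proof -
  have st: "subst_term u s = subst_term u t" and uE: "unifies_eqs u E"
    using u by (auto simp: unifies_eqs_def)
  consider "s = t" | x where "s = Var x" "t \<noteq> Var x" | x where "t = Var x" "s \<noteq> Var x"
    | f ss g ts where "s = Fun f ss" "t = Fun g ts"
    by (cases s; cases t) auto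
  then show ?thesis
  proof cases
    case 1
    have "card (vars_eqs E) \<le> card (vars_eqs ((s, t) # E))" by (rule card_mono) (auto simp: vars_eqs_def)
    moreover have "size_eqs E < size_eqs ((s, t) # E)" by (cases s) (simp_all add: size_eqs_def)
    ultimately show ?thesis
      using that[of E] uE mgu_eqs_trivial 1 by fastforce
  next
    case (2 x)
    then show ?thesis
      using unifies_eqs_Cons_Var_reduce[of u x t E] that st uE by blast
  next
    case (3 x)
    have "vars_eqs ((s, t) # E) = vars_eqs ((t, s) # E)" "size_eqs ((s, t) # E) = size_eqs ((t, s) # E)"
      by (auto simp: vars_eqs_def size_eqs_def)
    then show ?thesis
      using unifies_eqs_Cons_Var_reduce[of u x s E] that st uE 3 mgu_eqs_swap by (metis in_measures)
  next
    case (4 f ss g ts)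
    have fg: "f = g" and len: "length ss = length ts" and uz: "unifies_eqs u (zip ss ts @ E)"
      using st uE 4 map_eq_iff_zip[of "subst_term u" ss ts] by (auto simp: unifies_eqs_def)
    show ?thesis
    proof (rule that[OF _ uz])
      have "vars_eqs (zip ss ts @ E) = vars_eqs ((s, t) # E)"
        using vars_eqs_zip[OF len] by (auto simp: 4 vars_eqs_def)
      moreover have "size_eqs (zip ss ts @ E) < size_eqs ((s, t) # E)"
        using size_eqs_zip[OF len] by (simp add: 4 size_eqs_def)
      ultimately show "(zip ss ts @ E, (s, t) # E) \<in> unification_order" by simp
      show "\<exists>\<theta>'. mgu_eqs \<theta>' ((s, t) # E)" if "mgu_eqs \<theta> (zip ss ts @ E)" for \<theta>
        using mgu_eqs_decompose[OF len that] 4 fg by blast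
    qed
  qed
qed

lemma unifies_eqs_imp_mgu_eqs:
  fixes E :: "('f, 'v) equations"
  shows "unifies_eqs u E \<Longrightarrow> \<exists>\<theta>. mgu_eqs \<theta> E"
proof (induction E rule: wf_induct[OF wf_measures[of "[\<lambda>E. card (vars_eqs E), size_eqs]"]])
  case (1 E)
  show ?case
  proof (cases E)
    case Nil
    then show ?thesis using mgu_eqs_Nil by blast
  next
    case (Cons p E0)
    then obtain E' where "(E', E) \<in> unification_order" "unifies_eqs u E'"
      "\<And>\<theta>. mgu_eqs \<theta> E' \<Longrightarrow> \<exists>\<theta>'. mgu_eqs \<theta>' E"
      using unifies_eqs_Cons_reduce[of u "fst p" "snd p" E0] 1(2) by auto
    then show ?thesis using 1(1) by blast
  qed
qed

lemma unifier_imp_idem_rel_mgu: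
  assumes "unifier u a b"
  shows "\<exists>\<theta>. idem_rel_mgu \<theta> a b"
proof -
  obtain P ss where a: "a = Atom P ss" by (cases a)
  obtain Q ts where b: "b = Atom Q ts" by (cases b)
  have PQ: "P = Q" and len: "length ss = length ts" and "unifies_eqs u (zip ss ts)"
    using assms map_eq_iff_zip[of "subst_term u" ss ts] by (auto simp: a b unifier_def unifies_eqs_def)
  then obtain \<theta> where \<theta>: "mgu_eqs \<theta> (zip ss ts)" using unifies_eqs_imp_mgu_eqs by blast
  have unifiers: "unifier \<sigma> a b \<longleftrightarrow> unifies_eqs \<sigma> (zip ss ts)" for \<sigma>
    using map_eq_iff_zip[of "subst_term \<sigma>" ss ts] len by (auto simp: a b PQ unifier_def unifies_eqs_def)
  have "mgu \<theta> a b" and "\<theta> \<circ>\<^sub>s \<theta> = \<theta>"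
    using \<theta> unfolding mgu_def unifiers mgu_eqs_def by metis+
  moreover have "subst_vars \<theta> \<subseteq> vars_atom a \<union> vars_atom b"
    using \<theta> vars_eqs_zip[OF len] by (auto simp: mgu_eqs_def a b)
  ultimately show ?thesis by (auto simp: idem_rel_mgu_def)
qed

section \<open>P-goals and shiftings\<close>

lemma subst_pgoal_comp: "subst_pgoal \<tau> (subst_pgoal \<sigma> G) = subst_pgoal (\<sigma> \<circ>\<^sub>s \<tau>) G"
  unfolding subst_pgoal_def image_image by (simp add: case_prod_beta subst_atom_comp)

lemma shift_subst_pgoal_commute: "shift_pgoal \<pi> (subst_pgoal \<sigma> G) = subst_pgoal \<sigma> (shift_pgoal \<pi> G)"
  unfolding subst_pgoal_def shift_pgoal_def image_image by (simp add: case_prod_beta)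

lemma subst_pgoal_Var [simp]: "subst_pgoal Var G = G"
  unfolding subst_pgoal_def by (simp add: case_prod_beta)

lemma shift_pgoal_id [simp]: "shift_pgoal id G = G"
  unfolding shift_pgoal_def by (simp add: case_prod_beta)

lemma subst_pgoal_Un [simp]: "subst_pgoal \<sigma> (A \<union> B) = subst_pgoal \<sigma> A \<union> subst_pgoal \<sigma> B"
  unfolding subst_pgoal_def by auto

lemma shift_pgoal_Un [simp]: "shift_pgoal \<pi> (A \<union> B) = shift_pgoal \<pi> A \<union> shift_pgoal \<pi> B"
  unfolding shift_pgoal_def by auto

lemma subst_pgoal_insert [simp]:
  "subst_pgoal \<sigma> (insert x A) = insert (subst_patom \<sigma> x) (subst_pgoal \<sigma> A)"
  unfolding subst_pgoal_def subst_patom_def by (auto simp: case_prod_beta)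

lemma shift_pgoal_insert [simp]:
  "shift_pgoal \<pi> (insert x A) = insert (shift_patom \<pi> x) (shift_pgoal \<pi> A)"
  unfolding shift_pgoal_def shift_patom_def by (auto simp: case_prod_beta)

lemma prios_shift_pgoal: "prios (shift_pgoal \<pi> G) = \<pi> ` prios G"
  unfolding prios_def shift_pgoal_def image_image by (simp add: case_prod_beta)

lemma prios_subst_pgoal [simp]: "prios (subst_pgoal \<sigma> G) = prios G"
  unfolding prios_def subst_pgoal_def image_image by (simp add: case_prod_beta)

lemma vars_pgoal_subst_pgoal: "vars_pgoal (subst_pgoal \<sigma> G) = (\<Union>x\<in>vars_pgoal G. vars_term (\<sigma> x))"
  unfolding vars_pgoal_def subst_pgoal_def by (auto simp: case_prod_beta vars_atom_subst)

lemma vars_pgoal_shift_pgoal [simp]: "vars_pgoal (shift_pgoal \<pi> G) = vars_pgoal G"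
  unfolding vars_pgoal_def shift_pgoal_def by (auto simp: case_prod_beta)

lemma vars_pgoal_Un [simp]: "vars_pgoal (A \<union> B) = vars_pgoal A \<union> vars_pgoal B"
  unfolding vars_pgoal_def by auto

lemma vars_pgoal_insert [simp]: "vars_pgoal (insert x G) = vars_atom (fst x) \<union> vars_pgoal G"
  unfolding vars_pgoal_def by auto

lemma is_pgoal_empty [simp]: "is_pgoal {}"
  by (simp add: is_pgoal_def)

lemma prios_empty [simp]: "prios {} = {}"
  by (simp add: prios_def)

lemma shift_patom_id [simp]: "shift_patom id x = x"
  by (simp add: shift_patom_def)

lemma subst_patom_Var [simp]: "subst_patom Var x = x"
  by (simp add: subst_patom_def)

lemma vars_pgoal_subst_pgoal_subset: "vars_pgoal (subst_pgoal \<sigma> G) \<subseteq> vars_pgoal G \<union> subst_vars \<sigma>"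
  unfolding vars_pgoal_subst_pgoal
  by (force simp: subst_vars_def subst_domain_def subst_range_vars_def)

lemma vars_pgoal_rename: "vars_pgoal (subst_pgoal (\<lambda>x. Var (f x)) G) = f ` vars_pgoal G"
  unfolding vars_pgoal_subst_pgoal by auto

lemma vars_clause_rename: "vars_clause (subst_clause (\<lambda>x. Var (f x)) c) = f ` vars_clause c"
  unfolding vars_clause_def subst_clause_def by (simp add: vars_pgoal_rename vars_atom_rename image_Un)

lemma finite_vars_pgoal: "finite G \<Longrightarrow> finite (vars_pgoal G)"
  unfolding vars_pgoal_def by auto

lemma finite_vars_clause: "is_clause c \<Longrightarrow> finite (vars_clause c)"
  unfolding is_clause_def is_pgoal_def vars_clause_def by (auto intro: finite_vars_pgoal)

lemma is_pgoal_subst_pgoal: "is_pgoal G \<Longrightarrow> is_pgoal (subst_pgoal \<sigma> G)"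
  unfolding is_pgoal_def subst_pgoal_def by (auto simp: case_prod_beta)

lemma is_pgoal_shift_pgoal: "inj \<pi> \<Longrightarrow> is_pgoal G \<Longrightarrow> is_pgoal (shift_pgoal \<pi> G)"
  unfolding is_pgoal_def shift_pgoal_def by (auto simp: case_prod_beta inj_eq)

lemma subst_pgoal_cong:
  "(\<And>x. x \<in> vars_pgoal G \<Longrightarrow> \<sigma> x = \<tau> x) \<Longrightarrow> subst_pgoal \<sigma> G = subst_pgoal \<tau> G"
  unfolding subst_pgoal_def vars_pgoal_def
  by (force simp: case_prod_beta intro!: image_cong subst_atom_cong)

lemma shift_pgoal_cong: "(\<And>p. p \<in> prios G \<Longrightarrow> \<pi> p = \<pi>' p) \<Longrightarrow> shift_pgoal \<pi> G = shift_pgoal \<pi>' G"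
  unfolding shift_pgoal_def prios_def by (auto simp: case_prod_beta intro!: image_cong)

lemma strict_mono_image_eq_imp_eq_on:
  fixes f g :: "'a::linorder \<Rightarrow> 'b::linorder"
  assumes "strict_mono f" "strict_mono g" "finite A" "f ` A = g ` A" "x \<in> A"
  shows "f x = g x"
  using assms(3-)
proof (induction "card A" arbitrary: A)
  case (Suc n)
  define m where "m = Max A"
  have A: "A \<noteq> {}" "m \<in> A" using Suc by (auto simp: m_def intro: Max_in)
  have "f m = Max (f ` A)" "g m = Max (g ` A)"
    unfolding m_def using assms(1,2) Suc A by (simp_all add: mono_Max_commute strict_mono_mono)
  then have fm_gm: "f m = g m" using Suc by simp
  have "f ` (A - {m}) = g ` (A - {m})"
    using assms(1,2) Suc fm_gm by (simp add: image_set_diff strict_mono_imp_inj_on)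
  moreover have "n = card (A - {m})" using Suc A by simp
  ultimately show ?case
    using Suc.hyps(1)[of "A - {m}"] Suc.prems A fm_gm by (cases "x = m") auto
qed simp

lemma shifting_comp: "shifting \<rho> \<Longrightarrow> shifting \<pi> \<Longrightarrow> shifting (\<rho> \<circ> \<pi>)"
  unfolding shifting_def by (auto intro: bij_comp simp: strict_mono_def)

lemma shifting_id: "shifting id"
  unfolding shifting_def by (simp add: strict_mono_def)

section \<open>Derivations as chains of steps\<close>

fun derivation_chain :: "('p, 'f, 'v) pgoal \<Rightarrow> ('p, 'f, 'v) pstep list \<Rightarrow> bool" where
  "derivation_chain G [] = True"
| "derivation_chain G (s # ds) \<longleftrightarrow> valid_step s \<and> st_source s = G \<and> derivation_chain (st_target s) ds"

definition renamed_clause_vars :: "('p, 'f, 'v) pstep \<Rightarrow> 'v set" where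
  "renamed_clause_vars s = vars_clause (subst_clause (st_ren s) (st_clause s))"

fun fresh_renamings :: "'v set \<Rightarrow> ('p, 'f, 'v) pstep list \<Rightarrow> bool" where
  "fresh_renamings W [] = True"
| "fresh_renamings W (s # ds) \<longleftrightarrow>
     renamed_clause_vars s \<inter> W = {} \<and> fresh_renamings (W \<union> renamed_clause_vars s) ds"

lemma derivation_chain_iff:
  "derivation_chain G ds \<longleftrightarrow> (\<forall>i<length ds. valid_step (ds ! i)) \<and> (ds \<noteq> [] \<longrightarrow> st_source (ds ! 0) = G)
     \<and> (\<forall>i. Suc i < length ds \<longrightarrow> st_source (ds ! Suc i) = st_target (ds ! i))"
proof (induction ds arbitrary: G)
  case (Cons s ds)
  show ?case
    unfolding derivation_chain.simps Cons.IH
    by (cases ds) (auto simp: All_less_Suc2 nth_Cons split: nat.split)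
qed simp

lemma fresh_renamings_iff:
  "fresh_renamings W ds \<longleftrightarrow> (\<forall>i<length ds. renamed_clause_vars (ds ! i) \<inter> W = {})
     \<and> (\<forall>i<length ds. \<forall>j<i. renamed_clause_vars (ds ! i) \<inter> renamed_clause_vars (ds ! j) = {})"
proof (induction ds arbitrary: W)
  case (Cons s ds)
  show ?case
    unfolding fresh_renamings.simps Cons.IH length_Cons All_less_Suc2 by (auto; blast)
qed simp

lemma pderivation_iff_chain:
  "pderivation G ds \<longleftrightarrow> derivation_chain G ds \<and> fresh_renamings (vars_pgoal G) ds"
  unfolding pderivation_def derivation_chain_iff fresh_renamings_iff renamed_clause_vars_def
  by blast

section \<open>Lifting a single step\<close>

lemma valid_step_same_source:
  fixes s t :: "('p, 'f, 'v) pstep"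
  assumes "valid_step s" "valid_step t" "st_source s = st_source t"
  shows "st_sel s = st_sel t" "st_rest s = st_rest t"
proof -
  have least: "\<forall>y\<in>st_rest u. snd (st_sel u) < snd y" if "valid_step u" for u :: "('p, 'f, 'v) pstep"
    using that by (simp add: valid_step_def)
  have src: "insert (st_sel s) (st_rest s) = insert (st_sel t) (st_rest t)"
    using assms(3) by (simp add: st_source_def)
  show sel: "st_sel s = st_sel t"
    using src least[OF assms(1)] least[OF assms(2)] by (metis insertE insertI1 less_asym)
  show "st_rest s = st_rest t"
    using src least[OF assms(1)] least[OF assms(2)] unfolding sel by (metis insert_ident less_irrefl)
qed

definition pre_target :: "('p, 'f, 'v) pstep \<Rightarrow> ('p, 'f, 'v) pgoal" where
  "pre_target s = st_rest s \<union> shift_pgoal (st_shift s) (subst_pgoal (st_ren s) (snd (st_clause s)))"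

lemma st_target_eq_subst_pre_target: "st_target s = subst_pgoal (st_mgu s) (pre_target s)"
  by (simp add: st_target_def pre_target_def)

lemma vars_pre_target_subset:
  "vars_pgoal (pre_target s) \<subseteq> vars_pgoal (st_source s) \<union> renamed_clause_vars s"
  unfolding pre_target_def vars_pgoal_Un vars_pgoal_shift_pgoal st_source_def
    renamed_clause_vars_def vars_clause_def subst_clause_def vars_pgoal_insert
  by auto

lemma vars_target_subset:
  assumes "valid_step s"
  shows "vars_pgoal (st_target s) \<subseteq> vars_pgoal (st_source s) \<union> renamed_clause_vars s"
proof -
  have "subst_vars (st_mgu s) \<subseteq> vars_pgoal (st_source s) \<union> renamed_clause_vars s"
    using assms unfolding valid_step_def idem_rel_mgu_def st_source_def vars_pgoal_insert
      renamed_clause_vars_def vars_clause_def subst_clause_def by auto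
  then show ?thesis
    using vars_pre_target_subset[of s] vars_pgoal_subst_pgoal_subset[of "st_mgu s" "pre_target s"]
    unfolding st_target_eq_subst_pre_target by blast
qed

definition lifted_step ::
  "('f, 'v) subst \<Rightarrow> (rat \<Rightarrow> rat) \<Rightarrow> ('f, 'v) subst \<Rightarrow> ('f, 'v) subst \<Rightarrow> (rat \<Rightarrow> rat)
     \<Rightarrow> ('p, 'f, 'v) pstep \<Rightarrow> ('p, 'f, 'v) pstep" where
  "lifted_step \<eta> \<sigma> \<xi> \<theta> \<pi> s =
     \<lparr>st_sel = shift_patom \<sigma> (subst_patom \<eta> (st_sel s)), st_rest = shift_pgoal \<sigma> (subst_pgoal \<eta> (st_rest s)),
      st_clause = st_clause s, st_ren = \<xi>, st_mgu = \<theta>, st_shift = \<pi>\<rparr>"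

lemma lifted_step_simps [simp]:
  "st_source (lifted_step \<eta> \<sigma> \<xi> \<theta> \<pi> s) = shift_pgoal \<sigma> (subst_pgoal \<eta> (st_source s))"
  "st_sel (lifted_step \<eta> \<sigma> \<xi> \<theta> \<pi> s) = shift_patom \<sigma> (subst_patom \<eta> (st_sel s))"
  "st_rest (lifted_step \<eta> \<sigma> \<xi> \<theta> \<pi> s) = shift_pgoal \<sigma> (subst_pgoal \<eta> (st_rest s))"
  "st_clause (lifted_step \<eta> \<sigma> \<xi> \<theta> \<pi> s) = st_clause s"
  "st_ren (lifted_step \<eta> \<sigma> \<xi> \<theta> \<pi> s) = \<xi>"
  "st_mgu (lifted_step \<eta> \<sigma> \<xi> \<theta> \<pi> s) = \<theta>"
  "st_shift (lifted_step \<eta> \<sigma> \<xi> \<theta> \<pi> s) = \<pi>"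
  "(lifted_step \<eta> \<sigma> \<xi> \<theta> \<pi> s)\<lparr>st_shift := \<pi>'\<rparr> = lifted_step \<eta> \<sigma> \<xi> \<theta> \<pi>' s"
  by (simp_all add: lifted_step_def st_source_def)

lemma valid_lifted_step:
  assumes s: "valid_step s" and \<sigma>: "shifting \<sigma>" and \<xi>: "renaming \<xi>"
    and fresh: "vars_pgoal (shift_pgoal \<sigma> (subst_pgoal \<eta> (st_source s)))
      \<inter> vars_clause (subst_clause \<xi> (st_clause s)) = {}"
    and \<theta>: "idem_rel_mgu \<theta> (subst_atom \<eta> (fst (st_sel s))) (subst_atom \<xi> (fst (st_clause s)))"
  shows "valid_step (lifted_step \<eta> \<sigma> \<xi> \<theta> (\<sigma> \<circ> st_shift s) s)"
  unfolding valid_step_def lifted_step_simps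
proof (intro conjI)
  have inj: "inj \<sigma>" and mono: "strict_mono \<sigma>" using \<sigma> by (auto simp: shifting_def strict_mono_imp_inj_on)
  show "is_pgoal (shift_pgoal \<sigma> (subst_pgoal \<eta> (st_source s)))"
    using s inj by (simp add: valid_step_def is_pgoal_shift_pgoal is_pgoal_subst_pgoal)
  show "\<forall>y\<in>shift_pgoal \<sigma> (subst_pgoal \<eta> (st_rest s)). snd (shift_patom \<sigma> (subst_patom \<eta> (st_sel s))) < snd y"
    using s mono by (auto simp: valid_step_def shift_pgoal_def subst_pgoal_def shift_patom_def
        subst_patom_def strict_mono_less)
  show "shifting (\<sigma> \<circ> st_shift s)" using s \<sigma> by (simp add: valid_step_def shifting_comp)
  show "prios (shift_pgoal \<sigma> (subst_pgoal \<eta> (st_rest s)))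
      \<inter> prios (shift_pgoal (\<sigma> \<circ> st_shift s) (subst_pgoal \<xi> (snd (st_clause s)))) = {}"
    using s inj by (auto simp: valid_step_def prios_shift_pgoal image_comp inj_eq)
  show "idem_rel_mgu \<theta> (fst (shift_patom \<sigma> (subst_patom \<eta> (st_sel s)))) (subst_atom \<xi> (fst (st_clause s)))"
    using \<theta> by (simp add: shift_patom_def subst_patom_def)
qed (use s \<xi> fresh in \<open>simp_all add: valid_step_def\<close>)

text \<open>Completeness only guarantees some step of \<open>S\<close> with the same source and clause; it may use
  another renaming and mgu, but the step with ours and its shifting is a mutual congruent
  lowering of it, so it lies in \<open>S\<close> as well.\<close>
lemma complete_steps_reshift:
  assumes S: "complete_steps S" and t: "valid_step t"
  obtains \<pi> where "t\<lparr>st_shift := \<pi>\<rparr> \<in> S"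
proof -
  obtain s where sS: "s \<in> S" and src: "st_source s = st_source t" and cl: "st_clause s = st_clause t"
    using S t by (auto simp: complete_steps_def)
  have s: "valid_step s" using S sS by (auto simp: complete_steps_def)
  let ?t = "t\<lparr>st_shift := st_shift s\<rparr>"
  have same: "st_sel ?t = st_sel s" "st_rest ?t = st_rest s" "st_clause ?t = st_clause s"
    using valid_step_same_source[OF s t src] cl by simp_all
  have "valid_step ?t"
    using s t same by (simp add: valid_step_def st_source_def prios_shift_pgoal)
  then have "lowering_with Var id {} ?t s" "lowering_with Var id {} s ?t"
    using s same shifting_id by (simp_all add: lowering_with_def)
  then have "mutual_congruent_lowerings ?t s"
    unfolding mutual_congruent_lowerings_def congruent_lowering_def using shifting_id by fastforce
  then have "?t \<in> S" using S sS by (auto simp: complete_steps_def)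
  then show ?thesis by (rule that)
qed

lemma lowering_with_lifted_step:
  assumes "valid_step s" "valid_step (lifted_step \<eta> \<sigma> \<xi> \<theta> \<pi> s)" "shifting \<sigma>"
  shows "lowering_with \<eta> \<sigma> {} (lifted_step \<eta> \<sigma> \<xi> \<theta> \<pi> s) s"
  using assms by (simp add: lowering_with_def)

text \<open>\<open>\<rho>\<close> agrees with \<open>\<sigma>\<close> on the old goal because both are strictly monotone and map
  its finitely many priorities onto the same set.\<close>
lemma spec_independent_lowering_shift:
  assumes "spec_independent S" "s \<in> S" "t \<in> S" and low: "lowering_with \<eta> \<sigma> {} t s"
  obtains \<rho> where "shifting \<rho>" "\<And>p. p \<in> prios (st_rest s) \<Longrightarrow> \<rho> p = \<sigma> p"
    "shift_pgoal \<rho> (shift_pgoal (st_shift s) (snd (st_clause s)))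
       = shift_pgoal (st_shift t) (snd (st_clause s))"
proof -
  have "congruent_lowering {} t s"
    using assms unfolding spec_independent_def lowering_def by blast
  then obtain \<eta>' \<sigma>' \<rho> where low': "lowering_with \<eta>' \<sigma>' {} t s" and \<rho>: "shifting \<rho>"
    and rest: "shift_pgoal \<rho> (st_rest s) = shift_pgoal \<sigma>' (st_rest s)"
    and clause: "shift_pgoal \<rho> (shift_pgoal (st_shift s) (snd (st_clause s)))
       = shift_pgoal (st_shift t) (snd (st_clause s))"
    unfolding congruent_lowering_def by blast
  have fin: "finite (prios (st_rest s))"
    using low by (auto simp: lowering_with_def valid_step_def is_pgoal_def st_source_def prios_def)
  have mono: "strict_mono \<rho>" "strict_mono \<sigma>'" "strict_mono \<sigma>"
    using \<rho> low low' by (auto simp: lowering_with_def shifting_def)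
  have "shift_pgoal \<sigma>' (subst_pgoal \<eta>' (st_rest s)) = shift_pgoal \<sigma> (subst_pgoal \<eta> (st_rest s))"
    using low low' by (simp add: lowering_with_def)
  from arg_cong[OF this, of prios]
  have "\<sigma>' ` prios (st_rest s) = \<sigma> ` prios (st_rest s)" by (simp add: prios_shift_pgoal)
  moreover have "\<rho> ` prios (st_rest s) = \<sigma>' ` prios (st_rest s)"
    using arg_cong[OF rest, of prios] by (simp add: prios_shift_pgoal)
  ultimately have "\<rho> p = \<sigma> p" if "p \<in> prios (st_rest s)" for p
    using strict_mono_image_eq_imp_eq_on[OF mono(1,3) fin] that by simp
  then show ?thesis using that \<rho> clause by blast
qed

lemma st_target_lifted_step:
  assumes \<mu>_rest: "\<And>x. x \<in> vars_pgoal (st_rest s) \<Longrightarrow> \<mu> x = \<eta> x"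
    and \<mu>_clause: "\<And>y. y \<in> vars_clause (st_clause s) \<Longrightarrow> (st_ren s \<circ>\<^sub>s \<mu>) y = \<xi> y"
    and \<delta>: "\<mu> \<circ>\<^sub>s \<theta> = st_mgu s \<circ>\<^sub>s \<delta>"
    and \<rho>_rest: "\<And>p. p \<in> prios (st_rest s) \<Longrightarrow> \<rho> p = \<sigma> p"
    and \<rho>_clause: "shift_pgoal \<rho> (shift_pgoal (st_shift s) (snd (st_clause s))) = shift_pgoal \<pi> (snd (st_clause s))"
  shows "st_target (lifted_step \<eta> \<sigma> \<xi> \<theta> \<pi> s) = shift_pgoal \<rho> (subst_pgoal \<delta> (st_target s))"
proof -
  let ?B = "snd (st_clause s)"
  have "subst_pgoal \<mu> (st_rest s) = subst_pgoal \<eta> (st_rest s)"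
    using \<mu>_rest by (rule subst_pgoal_cong)
  moreover have "subst_pgoal \<mu> (subst_pgoal (st_ren s) ?B) = subst_pgoal \<xi> ?B"
    unfolding subst_pgoal_comp by (rule subst_pgoal_cong) (simp add: \<mu>_clause vars_clause_def)
  moreover have "shift_pgoal \<rho> (subst_pgoal \<eta> (st_rest s)) = shift_pgoal \<sigma> (subst_pgoal \<eta> (st_rest s))"
    using \<rho>_rest by (intro shift_pgoal_cong) simp
  moreover have "shift_pgoal \<rho> (shift_pgoal (st_shift s) (subst_pgoal \<xi> ?B)) = shift_pgoal \<pi> (subst_pgoal \<xi> ?B)"
    using \<rho>_clause by (simp add: shift_subst_pgoal_commute)
  ultimately have lifted: "shift_pgoal \<rho> (subst_pgoal \<mu> (pre_target s))
      = st_rest (lifted_step \<eta> \<sigma> \<xi> \<theta> \<pi> s) \<union> shift_pgoal \<pi> (subst_pgoal \<xi> ?B)"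
    by (simp add: pre_target_def shift_subst_pgoal_commute[symmetric])
  have "shift_pgoal \<rho> (subst_pgoal \<delta> (st_target s)) = subst_pgoal \<theta> (shift_pgoal \<rho> (subst_pgoal \<mu> (pre_target s)))"
    by (simp only: st_target_eq_subst_pre_target subst_pgoal_comp \<delta>[symmetric] shift_subst_pgoal_commute)
  also have "\<dots> = st_target (lifted_step \<eta> \<sigma> \<xi> \<theta> \<pi> s)"
    unfolding lifted by (simp add: st_target_def)
  finally show ?thesis ..
qed

lemma lifting_substitutions:
  assumes s: "valid_step s" and f': "bij f'"
    and fresh: "vars_pgoal (subst_pgoal \<eta> (st_source s)) \<inter> f' ` vars_clause (st_clause s) = {}"
    and agree: "\<And>x. x \<in> vars_pgoal (st_source s) \<Longrightarrow> (\<eta> \<circ>\<^sub>s \<tau>) x = (st_mgu s \<circ>\<^sub>s \<gamma>) x"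
  obtains \<mu> \<tau>' where "\<And>x. x \<in> vars_pgoal (st_source s) \<Longrightarrow> \<mu> x = \<eta> x"
    "\<And>y. y \<in> vars_clause (st_clause s) \<Longrightarrow> (st_ren s \<circ>\<^sub>s \<mu>) y = Var (f' y)"
    "\<And>x. x \<in> vars_pgoal (st_source s) \<union> renamed_clause_vars s \<Longrightarrow> (\<mu> \<circ>\<^sub>s \<tau>') x = (st_mgu s \<circ>\<^sub>s \<gamma>) x"
proof -
  define G C where "G = st_source s" and "C = vars_clause (st_clause s)"
  obtain f where f: "bij f" and \<xi>: "st_ren s = (\<lambda>x. Var (f x))"
    using s by (auto simp: valid_step_def renaming_def)
  have rv: "renamed_clause_vars s = f ` C"
    by (simp add: renamed_clause_vars_def \<xi> vars_clause_rename C_def)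
  have "vars_pgoal G \<inter> f ` C = {}"
    using s rv by (simp add: valid_step_def G_def renamed_clause_vars_def)
  then obtain \<mu> where \<mu>G: "\<And>x. x \<in> vars_pgoal G \<Longrightarrow> \<mu> x = \<eta> x"
    and \<mu>C: "\<And>y. y \<in> C \<Longrightarrow> \<mu> (f y) = Var (f' y)"
    using subst_merge_renaming[OF f, where \<sigma> = \<eta> and \<tau> = "\<lambda>y. Var (f' y)"] by blast
  obtain \<tau>' where \<tau>'G: "\<And>x. x \<in> vars_pgoal (subst_pgoal \<eta> G) \<Longrightarrow> \<tau>' x = \<tau> x"
    and \<tau>'C: "\<And>y. y \<in> C \<Longrightarrow> \<tau>' (f' y) = (st_mgu s \<circ>\<^sub>s \<gamma>) (f y)"
    using subst_merge_renaming[OF f' fresh[folded G_def C_def],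
        where \<sigma> = \<tau> and \<tau> = "\<lambda>y. (st_mgu s \<circ>\<^sub>s \<gamma>) (f y)"] by blast
  have \<mu>\<tau>': "(\<mu> \<circ>\<^sub>s \<tau>') x = (st_mgu s \<circ>\<^sub>s \<gamma>) x" if "x \<in> vars_pgoal G \<union> f ` C" for x
  proof (cases "x \<in> vars_pgoal G")
    case True
    then have "subst_term \<tau>' (\<eta> x) = subst_term \<tau> (\<eta> x)"
      by (intro subst_term_cong \<tau>'G) (auto simp: vars_pgoal_subst_pgoal)
    then show ?thesis using True agree \<mu>G by (simp add: subst_comp_def G_def)
  next
    case False
    then show ?thesis using that \<mu>C \<tau>'C by (auto simp: subst_comp_def)
  qed
  show ?thesis
  proof (rule that)
    show "(st_ren s \<circ>\<^sub>s \<mu>) y = Var (f' y)" if "y \<in> vars_clause (st_clause s)" for y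
      using \<mu>C that by (simp add: \<xi> subst_comp_def C_def)
  qed (use \<mu>G \<mu>\<tau>' rv in \<open>auto simp: G_def\<close>)
qed

lemma unifier_lifted_iff:
  assumes "\<And>x. x \<in> vars_pgoal (st_source s) \<Longrightarrow> \<mu> x = \<eta> x"
    and "\<And>y. y \<in> vars_clause (st_clause s) \<Longrightarrow> (st_ren s \<circ>\<^sub>s \<mu>) y = \<xi> y"
  shows "unifier \<upsilon> (subst_atom \<eta> (fst (st_sel s))) (subst_atom \<xi> (fst (st_clause s)))
    \<longleftrightarrow> unifier (\<mu> \<circ>\<^sub>s \<upsilon>) (fst (st_sel s)) (subst_atom (st_ren s) (fst (st_clause s)))"
proof -
  have "subst_atom \<mu> (fst (st_sel s)) = subst_atom \<eta> (fst (st_sel s))"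
    by (rule subst_atom_cong) (simp add: assms(1) st_source_def)
  moreover have "subst_atom (st_ren s \<circ>\<^sub>s \<mu>) (fst (st_clause s)) = subst_atom \<xi> (fst (st_clause s))"
    by (rule subst_atom_cong) (simp add: assms(2) vars_clause_def)
  ultimately show ?thesis by (simp add: unifier_def subst_atom_comp)
qed

lemma lifted_instance_agrees:
  assumes "\<And>x. x \<in> vars_pgoal (pre_target s) \<Longrightarrow> (\<mu> \<circ>\<^sub>s \<tau>') x = (st_mgu s \<circ>\<^sub>s \<gamma>) x"
    and "\<mu> \<circ>\<^sub>s \<theta> = st_mgu s \<circ>\<^sub>s \<delta>" "\<tau>' = \<theta> \<circ>\<^sub>s \<epsilon>"
    and x: "x \<in> vars_pgoal (st_target s)"
  shows "(\<delta> \<circ>\<^sub>s \<epsilon>) x = \<gamma> x"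
proof -
  obtain y where y: "y \<in> vars_pgoal (pre_target s)" "x \<in> vars_term (st_mgu s y)"
    using x unfolding st_target_eq_subst_pre_target vars_pgoal_subst_pgoal by blast
  have "(st_mgu s \<circ>\<^sub>s (\<delta> \<circ>\<^sub>s \<epsilon>)) y = (st_mgu s \<circ>\<^sub>s \<gamma>) y"
    using assms(1)[OF y(1)] by (simp add: assms(2,3) subst_comp_assoc[symmetric])
  then show ?thesis
    using y(2) subst_term_eq_imp_eq_on_vars by (metis subst_comp_def)
qed

lemma lifted_mgu:
  assumes s: "valid_step s"
    and \<mu>: "\<And>x. x \<in> vars_pgoal (st_source s) \<Longrightarrow> \<mu> x = \<eta> x"
      "\<And>y. y \<in> vars_clause (st_clause s) \<Longrightarrow> (st_ren s \<circ>\<^sub>s \<mu>) y = \<xi> y"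
    and \<mu>\<tau>': "\<And>x. x \<in> vars_pgoal (st_source s) \<union> renamed_clause_vars s \<Longrightarrow> (\<mu> \<circ>\<^sub>s \<tau>') x = (st_mgu s \<circ>\<^sub>s \<gamma>) x"
  obtains \<theta>' \<delta> \<epsilon> where "idem_rel_mgu \<theta>' (subst_atom \<eta> (fst (st_sel s))) (subst_atom \<xi> (fst (st_clause s)))"
    "\<mu> \<circ>\<^sub>s \<theta>' = st_mgu s \<circ>\<^sub>s \<delta>" "\<tau>' = \<theta>' \<circ>\<^sub>s \<epsilon>"
proof -
  define a h where "a = fst (st_sel s)" and "h = subst_atom (st_ren s) (fst (st_clause s))"
  have \<theta>: "idem_rel_mgu (st_mgu s) a h"
    using s by (simp add: valid_step_def a_def h_def)
  have "subst_atom (\<mu> \<circ>\<^sub>s \<tau>') b = subst_atom (st_mgu s \<circ>\<^sub>s \<gamma>) b" if "b \<in> {a, h}" for b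
    by (rule subst_atom_cong, rule \<mu>\<tau>') (use that in \<open>auto simp: a_def h_def st_source_def
        renamed_clause_vars_def vars_clause_def subst_clause_def\<close>)
  then have "unifier (\<mu> \<circ>\<^sub>s \<tau>') a h"
    using \<theta> by (simp add: unifier_def subst_atom_comp idem_rel_mgu_def mgu_def)
  then have \<tau>': "unifier \<tau>' (subst_atom \<eta> (fst (st_sel s))) (subst_atom \<xi> (fst (st_clause s)))"
    using unifier_lifted_iff[OF \<mu>] by (simp add: a_def h_def)
  then obtain \<theta>' where \<theta>': "idem_rel_mgu \<theta>' (subst_atom \<eta> (fst (st_sel s))) (subst_atom \<xi> (fst (st_clause s)))"
    using unifier_imp_idem_rel_mgu by blast
  then have "unifier (\<mu> \<circ>\<^sub>s \<theta>') a h"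
    using unifier_lifted_iff[OF \<mu>] by (simp add: a_def h_def idem_rel_mgu_def mgu_def)
  then obtain \<delta> where "\<mu> \<circ>\<^sub>s \<theta>' = st_mgu s \<circ>\<^sub>s \<delta>"
    using \<theta> by (auto simp: idem_rel_mgu_def mgu_def)
  moreover obtain \<epsilon> where "\<tau>' = \<theta>' \<circ>\<^sub>s \<epsilon>"
    using \<theta>' \<tau>' by (auto simp: idem_rel_mgu_def mgu_def)
  ultimately show ?thesis using that \<theta>' by blast
qed

lemma lift_step:
  fixes s :: "('p, 'f, 'v) pstep"
  assumes inf: "infinite (UNIV :: 'v set)"
    and S: "complete_steps S" "spec_independent S" "s \<in> S"
    and \<sigma>: "shifting \<sigma>"
    and W: "finite W" "vars_pgoal (shift_pgoal \<sigma> (subst_pgoal \<eta> (st_source s))) \<subseteq> W"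
    and agree: "\<And>x. x \<in> vars_pgoal (st_source s) \<Longrightarrow> (\<eta> \<circ>\<^sub>s \<tau>) x = (st_mgu s \<circ>\<^sub>s \<gamma>) x"
  obtains t \<rho> \<delta> \<epsilon> where "t \<in> S" "st_source t = shift_pgoal \<sigma> (subst_pgoal \<eta> (st_source s))"
    "st_clause t = st_clause s" "renamed_clause_vars t \<inter> W = {}" "finite (renamed_clause_vars t)"
    "shifting \<rho>" "st_target t = shift_pgoal \<rho> (subst_pgoal \<delta> (st_target s))"
    "\<And>x. x \<in> vars_pgoal (st_target s) \<Longrightarrow> (\<delta> \<circ>\<^sub>s \<epsilon>) x = \<gamma> x"
proof -
  have s: "valid_step s" using S by (auto simp: complete_steps_def)
  define C where "C = vars_clause (st_clause s)"
  have "finite C" using s by (simp add: valid_step_def C_def finite_vars_clause)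
  then obtain f' where f': "bij f'" "f' ` C \<inter> W = {}" using fresh_bij[OF inf _ W(1)] by blast
  define \<xi>' where "\<xi>' = (\<lambda>x. Var (f' x) :: ('f, 'v) fterm)"
  have renamed_vars: "vars_clause (subst_clause \<xi>' (st_clause s)) = f' ` C"
    by (simp add: \<xi>'_def vars_clause_rename C_def)
  have "vars_pgoal (subst_pgoal \<eta> (st_source s)) \<inter> f' ` vars_clause (st_clause s) = {}"
    using W f' by (auto simp: C_def)
  then obtain \<mu> \<tau>' where \<mu>: "\<And>x. x \<in> vars_pgoal (st_source s) \<Longrightarrow> \<mu> x = \<eta> x"
    "\<And>y. y \<in> vars_clause (st_clause s) \<Longrightarrow> (st_ren s \<circ>\<^sub>s \<mu>) y = \<xi>' y"
    and \<mu>\<tau>': "\<And>x. x \<in> vars_pgoal (st_source s) \<union> renamed_clause_vars s \<Longrightarrow> (\<mu> \<circ>\<^sub>s \<tau>') x = (st_mgu s \<circ>\<^sub>s \<gamma>) x"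
    using lifting_substitutions[OF s f'(1) _ agree] unfolding \<xi>'_def by blast
  obtain \<theta>' \<delta> \<epsilon>
    where \<theta>': "idem_rel_mgu \<theta>' (subst_atom \<eta> (fst (st_sel s))) (subst_atom \<xi>' (fst (st_clause s)))"
      and \<delta>: "\<mu> \<circ>\<^sub>s \<theta>' = st_mgu s \<circ>\<^sub>s \<delta>" and \<epsilon>: "\<tau>' = \<theta>' \<circ>\<^sub>s \<epsilon>"
    by (rule lifted_mgu[OF s \<mu> \<mu>\<tau>'])
  have "valid_step (lifted_step \<eta> \<sigma> \<xi>' \<theta>' (\<sigma> \<circ> st_shift s) s)"
    by (rule valid_lifted_step[OF s \<sigma>]) (use W f' \<theta>' renamed_vars in
        \<open>auto simp: renaming_def \<xi>'_def\<close>)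
  then obtain \<pi> where "(lifted_step \<eta> \<sigma> \<xi>' \<theta>' (\<sigma> \<circ> st_shift s) s)\<lparr>st_shift := \<pi>\<rparr> \<in> S"
    by (rule complete_steps_reshift[OF S(1)])
  then have tS: "lifted_step \<eta> \<sigma> \<xi>' \<theta>' \<pi> s \<in> S" by simp
  then have "valid_step (lifted_step \<eta> \<sigma> \<xi>' \<theta>' \<pi> s)" using S(1) by (auto simp: complete_steps_def)
  then obtain \<rho> where \<rho>: "shifting \<rho>" "\<And>p. p \<in> prios (st_rest s) \<Longrightarrow> \<rho> p = \<sigma> p"
    "shift_pgoal \<rho> (shift_pgoal (st_shift s) (snd (st_clause s))) = shift_pgoal \<pi> (snd (st_clause s))"
    using spec_independent_lowering_shift[OF S(2,3) tS lowering_with_lifted_step[OF s _ \<sigma>]] by auto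
  show ?thesis
  proof (rule that[OF tS _ _ _ _ \<rho>(1) st_target_lifted_step[OF _ \<mu>(2) \<delta> \<rho>(2,3)]])
    show "renamed_clause_vars (lifted_step \<eta> \<sigma> \<xi>' \<theta>' \<pi> s) \<inter> W = {}"
      "finite (renamed_clause_vars (lifted_step \<eta> \<sigma> \<xi>' \<theta>' \<pi> s))"
      using renamed_vars f' \<open>finite C\<close> by (simp_all add: renamed_clause_vars_def)
    show "\<And>x. x \<in> vars_pgoal (st_rest s) \<Longrightarrow> \<mu> x = \<eta> x"
      using \<mu>(1) by (simp add: st_source_def)
    have "(\<mu> \<circ>\<^sub>s \<tau>') y = (st_mgu s \<circ>\<^sub>s \<gamma>) y" if "y \<in> vars_pgoal (pre_target s)" for y
      using \<mu>\<tau>'[OF subsetD[OF vars_pre_target_subset that]] .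
    then show "(\<delta> \<circ>\<^sub>s \<epsilon>) x = \<gamma> x" if "x \<in> vars_pgoal (st_target s)" for x
      using lifted_instance_agrees[OF _ \<delta> \<epsilon> that] by blast
  qed simp_all
qed

section \<open>Lifting derivations\<close>

lemma composed_mgu_Cons: "composed_mgu (s # ds) = st_mgu s \<circ>\<^sub>s composed_mgu ds"
  by (simp add: composed_mgu_def)

lemma lift_derivation_chain:
  fixes S :: "('p, 'f, 'v) pstep set"
  assumes "infinite (UNIV :: 'v set)" "complete_steps S" "spec_independent S"
  shows "derivation_chain G ds \<Longrightarrow> set ds \<subseteq> S \<Longrightarrow> shifting \<sigma> \<Longrightarrow> finite W
    \<Longrightarrow> vars_pgoal (shift_pgoal \<sigma> (subst_pgoal \<eta> G)) \<subseteq> W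
    \<Longrightarrow> (\<And>x. x \<in> vars_pgoal G \<Longrightarrow> (\<eta> \<circ>\<^sub>s \<tau>) x = (composed_mgu ds \<circ>\<^sub>s \<kappa>) x)
    \<Longrightarrow> \<exists>ds'. derivation_chain (shift_pgoal \<sigma> (subst_pgoal \<eta> G)) ds' \<and> set ds' \<subseteq> S
          \<and> template ds' = template ds \<and> fresh_renamings W ds'"
proof (induction ds arbitrary: G \<sigma> \<eta> \<tau> W)
  case Nil
  then show ?case by (intro exI[of _ "[]"]) (simp add: template_def)
next
  case (Cons s ds)
  then have "s \<in> S" and G: "st_source s = G"
    and agree: "\<And>x. x \<in> vars_pgoal (st_source s) \<Longrightarrow> (\<eta> \<circ>\<^sub>s \<tau>) x = (st_mgu s \<circ>\<^sub>s (composed_mgu ds \<circ>\<^sub>s \<kappa>)) x"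
    by (auto simp: composed_mgu_Cons subst_comp_assoc)
  have "vars_pgoal (shift_pgoal \<sigma> (subst_pgoal \<eta> (st_source s))) \<subseteq> W" using Cons.prems(5) G by simp
  then obtain t \<rho> \<delta> \<epsilon> where t: "t \<in> S" "st_source t = shift_pgoal \<sigma> (subst_pgoal \<eta> (st_source s))"
    "st_clause t = st_clause s" "renamed_clause_vars t \<inter> W = {}" "finite (renamed_clause_vars t)"
    and \<rho>: "shifting \<rho>" and target: "st_target t = shift_pgoal \<rho> (subst_pgoal \<delta> (st_target s))"
    and agree': "\<And>x. x \<in> vars_pgoal (st_target s) \<Longrightarrow> (\<delta> \<circ>\<^sub>s \<epsilon>) x = (composed_mgu ds \<circ>\<^sub>s \<kappa>) x"
    using lift_step[OF assms \<open>s \<in> S\<close> Cons.prems(3,4) _ agree] by blast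
  have "valid_step t" using assms(2) t(1) by (auto simp: complete_steps_def)
  then have "vars_pgoal (st_target t) \<subseteq> W \<union> renamed_clause_vars t"
    using vars_target_subset[of t] t(2) Cons.prems(5) G by auto
  then have "\<exists>ds'. derivation_chain (st_target t) ds' \<and> set ds' \<subseteq> S
      \<and> template ds' = template ds \<and> fresh_renamings (W \<union> renamed_clause_vars t) ds'"
    unfolding target
    by (intro Cons.IH[OF _ _ \<rho> _ _ agree']) (use Cons.prems(1,2,4) t(5) in auto)
  then obtain ds' where "derivation_chain (st_target t) ds'" "set ds' \<subseteq> S"
    "template ds' = template ds" "fresh_renamings (W \<union> renamed_clause_vars t) ds'"
    by blast
  then show ?case
    using \<open>valid_step t\<close> t G by (intro exI[of _ "t # ds'"]) (simp add: template_def)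
qed

theorem lemmaB1:
  fixes S :: "('p, 'f, 'v) pstep set"
    and G :: "('p, 'f, 'v) pgoal"
    and \<phi> :: "('f, 'v) subst"
    and ds :: "('p, 'f, 'v) pstep list"
  assumes "infinite (UNIV :: 'v set)"
    and "spec_indep_scheduling_rule S"
    and "is_pgoal G"
    and "pderivation G ds" and "via S ds"
  shows "\<exists>ds'. pderivation (subst_pgoal \<phi> (subst_pgoal (composed_mgu ds) G)) ds'
               \<and> via S ds' \<and> template ds' = template ds"
proof -
  let ?\<eta> = "composed_mgu ds \<circ>\<^sub>s \<phi>"
  have G': "subst_pgoal \<phi> (subst_pgoal (composed_mgu ds) G) = shift_pgoal id (subst_pgoal ?\<eta> G)"
    by (simp add: subst_pgoal_comp)
  have "finite (vars_pgoal (subst_pgoal ?\<eta> G))"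
    using assms(3) is_pgoal_subst_pgoal by (auto simp: is_pgoal_def intro: finite_vars_pgoal)
  then obtain ds' where "derivation_chain (shift_pgoal id (subst_pgoal ?\<eta> G)) ds'" "set ds' \<subseteq> S"
    "template ds' = template ds" "fresh_renamings (vars_pgoal (subst_pgoal ?\<eta> G)) ds'"
    using lift_derivation_chain[of S G ds id "vars_pgoal (subst_pgoal ?\<eta> G)" ?\<eta> Var \<phi>] assms shifting_id
    by (auto simp: spec_indep_scheduling_rule_def pderivation_iff_chain via_def)
  then show ?thesis by (auto simp: G' pderivation_iff_chain via_def)
qed

end
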